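(* Let $H_0,H_1\in\mathbb{C}^{d\times d}$ with $H_0$ invertible, put $P_0=H_0H_0^*+H_1H_1^*$, $P_1=H_0H_1^*$, $P(z)=P_1^*z^{-1}+P_0+P_1z$ (so $P(z)=H(z)H(z)^*$ with $H(z)=H_0+H_1z^{-1}$), $\bar X=H_0H_0^*$ and $A=H_1H_0^{-1}$. Define $g(X)=P_0-P_1^*X^{-1}P_1$ on invertible $d\times d$ matrices. Then: (a) $g(\bar X)=\bar X$, i.e. $\bar X$ solves $X=P_0-P_1^*X^{-1}P_1$, and $H_1=P_1^*H_0^{-*}$; (b) the derivative of $g$ at $\bar X$, written in vectorized form (the matrix $J\in\mathbb{C}^{d^2\times d^2}$ with $\mathrm{vec}(Dg(\bar X)[E])=J\,\mathrm{vec}(E)$ for all $E$), equals $J=\overline{A}\otimes A$; (c) if $\det P(\theta)=0$ for some $\theta\in\mathbb{C}$ with $|\theta|=1$, then $1$ is an eigenvalue of $J$; (d) conversely, if the spectral radius of $A$ is at most $1$ and $1$ is an eigenvalue of $J$, then $\det P(\theta)=0$ for some $|\theta|=1$. Consequently, under $\rho(A)\le 1$, $\det P$ vanishes somewhere on the unit circle iff $\rho(J)=1$ iff the derivative $I-J$ of $f(X)=X-g(X)$ at $\bar X$ is singular.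
   Context: $A^*$ is the conjugate transpose, $\overline{A}$ the entrywise complex conjugate, $A^{-*}=(A^* )^{-1}$, $\otimes$ the Kronecker product, and $\mathrm{vec}$ stacks the columns of a matrix into a vector (so $\mathrm{vec}(ABC)=(C^T\otimes A)\mathrm{vec}(B)$). $\rho(\cdot)$ denotes spectral radius. *)

theory Defs
  imports "HOL-Analysis.Analysis"
begin

text \<open>Complex d x d matrices are rendered as complex^'n^'n (d = CARD('n)).\<close>

definition cadj :: "complex^'n^'m \<Rightarrow> complex^'m^'n" where
  "cadj A = (\<chi> i j. cnj (A $ j $ i))"

definition mconj :: "complex^'n^'m \<Rightarrow> complex^'n^'m" where
  "mconj A = (\<chi> i j. cnj (A $ i $ j))"

definition cscale :: "complex \<Rightarrow> complex^'n^'m \<Rightarrow> complex^'n^'m" where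
  "cscale c A = (\<chi> i j. c * A $ i $ j)"

text \<open>vec stacks the columns: the entry of vec E at index (i,j) is E i j; indices of
  'n \<times> 'n are ordered column-major (j outer, i inner), so this is the usual vec.\<close>
definition vecm :: "complex^'n^'m \<Rightarrow> complex^('m \<times> 'n)" where
  "vecm E = (\<chi> p. E $ fst p $ snd p)"

text \<open>Kronecker product, with rows/columns indexed consistently with vecm, so that
  vecm (A ** X ** C) = kron (transpose C) A *v vecm X.\<close>
definition kron :: "complex^'n^'n \<Rightarrow> complex^'m^'m \<Rightarrow> complex^('m \<times> 'n)^('m \<times> 'n)" where
  "kron B A = (\<chi> p q. B $ snd p $ snd q * A $ fst p $ fst q)"

definition is_eigenvalue :: "complex^'n^'n \<Rightarrow> complex \<Rightarrow> bool" where
  "is_eigenvalue M l \<longleftrightarrow> (\<exists>v. v \<noteq> 0 \<and> M *v v = l *s v)"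

definition spectral_radius :: "complex^'n^'n \<Rightarrow> real" where
  "spectral_radius M = Max {cmod l | l. is_eigenvalue M l}"

end

theory Submission
  imports Defs "HOL-Computational_Algebra.Fundamental_Theorem_Algebra"
begin

(*
  With Xbar = H0 H0^* one has P1^* Xbar^-1 = A and Xbar^-1 P1 = A^*, so P1^* Xbar^-1 P1 = H1 H1^*
  and Xbar is a fixed point of g; differentiating X^-1 gives Dg(Xbar)[E] = A E A^*, whose matrix in
  vec coordinates is conj(A) (x) A.  The eigenvalues of E |-> A E C are exactly the products l u of
  eigenvalues l of A and u of C: rank-one eigenmatrices v w^T give one inclusion, and annihilating
  C by a product of linear factors produces a left eigenvector of C for the other.  On the unit
  circle P(theta) = H H^* with H = conj(theta) (A + theta I) H0, so det P(theta) = 0 iff -theta is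
  an eigenvalue of A, and then 1 = |theta|^2 is an eigenvalue of J.  Conversely, if rho(A) <= 1,
  every eigenvalue l conj(u) of J has modulus at most 1, with equality only if |u| = 1.
*)

section \<open>Matrix algebra\<close>

lemma mat_mult_left: "mat c ** (M::'a::comm_semiring_1^'n^'m) = (\<chi> i j. c * M$i$j)"
  by (simp add: vec_eq_iff matrix_matrix_mult_def mat_def if_distrib if_distribR
      cong: if_cong)

lemma mat_mult_right: "(M::'a::comm_semiring_1^'n^'m) ** mat c = (\<chi> i j. c * M$i$j)"
  by (simp add: vec_eq_iff matrix_matrix_mult_def mat_def if_distrib if_distribR
      mult.commute cong: if_cong)

lemma mat_mult_commute: "mat c ** (M::'a::comm_semiring_1^'n^'n) = M ** mat c"
  by (simp add: mat_mult_left mat_mult_right)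

lemma mat_mult_mat: "mat a ** mat b = (mat (a * b) :: 'a::comm_semiring_1^'n^'n)"
  unfolding mat_mult_left by (simp add: vec_eq_iff mat_def)

lemma mat_add: "mat a + mat b = (mat (a + b) :: 'a::comm_semiring_1^'n^'n)"
  by (simp add: vec_eq_iff mat_def)

lemma mat_uminus: "- mat a = (mat (- a) :: 'a::comm_ring_1^'n^'n)"
  by (simp add: vec_eq_iff mat_def)

lemma matrix_add_rdistrib: "(B + C) ** A = B ** A + C ** (A::'a::semiring_1^_^_)"
  by (simp add: vec_eq_iff matrix_matrix_mult_def distrib_right sum.distrib)

lemma matrix_diff_ldistrib: "A ** (B - C) = A ** B - A ** (C::'a::ring_1^_^_)"
  by (simp add: vec_eq_iff matrix_matrix_mult_def right_diff_distrib sum_subtractf)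

lemma matrix_diff_rdistrib: "(B - C) ** A = B ** A - C ** (A::'a::ring_1^_^_)"
  by (simp add: vec_eq_iff matrix_matrix_mult_def left_diff_distrib sum_subtractf)

lemma matrix_uminus_left: "(- B) ** A = - (B ** (A::'a::ring_1^_^_))"
  by (simp add: vec_eq_iff matrix_matrix_mult_def sum_negf)

lemma matrix_uminus_right: "A ** (- B) = - (A ** (B::'a::ring_1^_^_))"
  by (simp add: vec_eq_iff matrix_matrix_mult_def sum_negf)

lemma matrix_mult_zero_left [simp]: "0 ** (A::'a::semiring_1^_^_) = 0"
  by (simp add: vec_eq_iff matrix_matrix_mult_def)

lemma matrix_mult_zero_right [simp]: "A ** (0::'a::semiring_1^_^_) = 0"
  by (simp add: vec_eq_iff matrix_matrix_mult_def)

lemma cscale_eq_mat_mult: "cscale c M = mat c ** M"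
  by (simp add: cscale_def mat_mult_left)

lemma cadj_mult: "cadj (A ** B) = cadj B ** cadj A"
  by (simp add: cadj_def vec_eq_iff matrix_matrix_mult_def mult.commute)

lemma cadj_cadj [simp]: "cadj (cadj A) = A"
  by (simp add: cadj_def vec_eq_iff)

lemma cadj_diff: "cadj (A - B) = cadj A - cadj B"
  by (simp add: cadj_def vec_eq_iff)

lemma cadj_mat: "cadj (mat c) = (mat (cnj c) :: complex^'n^'n)"
  by (simp add: cadj_def vec_eq_iff mat_def)

lemma transpose_cadj: "transpose (cadj A) = mconj A"
  by (simp add: transpose_def cadj_def mconj_def)

lemma det_cadj: "det (cadj A) = cnj (det (A::complex^'n^'n))"
proof -
  have "det (mconj A) = cnj (det A)"
    by (simp add: det_def mconj_def)
  then show ?thesis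
    by (metis det_transpose transpose_cadj transpose_transpose)
qed

lemma matrix_inv_left: "invertible (A::'a::field^'n^'n) \<Longrightarrow> matrix_inv A ** A = mat 1"
  and matrix_inv_right: "invertible (A::'a::field^'n^'n) \<Longrightarrow> A ** matrix_inv A = mat 1"
  unfolding invertible_def matrix_inv_def by (metis (mono_tags, lifting) someI_ex)+

lemma matrix_inv_unique: "B ** (A::'a::field^'n^'n) = mat 1 \<Longrightarrow> matrix_inv A = B"
  by (metis invertible_left_inverse matrix_inv_right matrix_mul_assoc matrix_mul_lid
      matrix_mul_rid)

lemma invertible_mult_iff:
  fixes A B :: "'a::field^'n^'n"
  shows "invertible (A ** B) \<longleftrightarrow> invertible A \<and> invertible B"
  unfolding invertible_det_nz by (simp add: det_mul)

lemma invertible_mat_iff: "invertible (mat c :: 'a::field^'n^'n) \<longleftrightarrow> c \<noteq> 0"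
  by (simp add: invertible_det_nz det_diagonal mat_def)

lemma invertible_uminus_iff: "invertible (- A) \<longleftrightarrow> invertible (A::'a::field^'n^'n)"
proof -
  have "- A = mat (- 1) ** A" by (simp add: mat_mult_left vec_eq_iff)
  then show ?thesis by (simp add: invertible_mult_iff invertible_mat_iff)
qed

lemma invertible_transpose_iff: "invertible (transpose A) \<longleftrightarrow> invertible (A::'a::field^'n^'n)"
  by (simp add: invertible_det_nz)

lemma invertible_cadj_iff: "invertible (cadj A) \<longleftrightarrow> invertible (A::complex^'n^'n)"
  by (simp add: invertible_det_nz det_cadj)

lemma matrix_inv_mult:
  fixes A B :: "'a::field^'n^'n"
  assumes "invertible A" and "invertible B"
  shows "matrix_inv (A ** B) = matrix_inv B ** matrix_inv A"
  by (rule matrix_inv_unique)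
    (metis assms matrix_inv_left matrix_mul_assoc matrix_mul_lid)

lemma matrix_inv_cadj: "invertible A \<Longrightarrow> matrix_inv (cadj A) = cadj (matrix_inv (A::complex^'n^'n))"
  by (rule matrix_inv_unique) (simp add: cadj_mult[symmetric] matrix_inv_right cadj_mat)

lemma not_invertible_if_mult_right_eq_0:
  "N ** Y = 0 \<Longrightarrow> Y \<noteq> 0 \<Longrightarrow> \<not> invertible (N::'a::field^'n^'n)"
  by (metis matrix_inv_left matrix_mul_assoc matrix_mul_lid matrix_mult_zero_right)

lemma not_invertible_if_mult_left_eq_0:
  "Y ** N = 0 \<Longrightarrow> Y \<noteq> 0 \<Longrightarrow> \<not> invertible (N::'a::field^'n^'n)"
  by (metis matrix_inv_right matrix_mul_assoc matrix_mul_rid matrix_mult_zero_left)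

section \<open>Eigenvalues\<close>

lemma mat_mult_vector: "(mat c :: 'a::comm_semiring_1^'n^'n) *v v = c *s v"
  by (simp add: vec_eq_iff matrix_vector_mult_def mat_def if_distrib if_distribR cong: if_cong)

lemma is_eigenvalue_iff_not_invertible:
  "is_eigenvalue (M::complex^'n^'n) l \<longleftrightarrow> \<not> invertible (M - mat l)"
  unfolding is_eigenvalue_def invertible_left_inverse matrix_left_invertible_ker
  by (auto simp: matrix_vector_mult_diff_rdistrib mat_mult_vector)

lemma is_eigenvalueI_right:
  "M ** Y = mat l ** Y \<Longrightarrow> Y \<noteq> 0 \<Longrightarrow> is_eigenvalue (M::complex^'n^'n) l"
  unfolding is_eigenvalue_iff_not_invertible
  by (rule not_invertible_if_mult_right_eq_0) (simp_all add: matrix_diff_rdistrib)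

lemma is_eigenvalueI_left:
  assumes "Y ** M = mat l ** Y" and "Y \<noteq> 0"
  shows "is_eigenvalue (M::complex^'n^'n) l"
proof -
  have "Y ** (M - mat l) = 0"
    using assms(1) by (simp add: matrix_diff_ldistrib mat_mult_left mat_mult_right)
  then show ?thesis
    using assms(2) not_invertible_if_mult_left_eq_0 is_eigenvalue_iff_not_invertible by blast
qed

lemma is_eigenvalue_transpose:
  "is_eigenvalue (transpose M) l \<longleftrightarrow> is_eigenvalue (M::complex^'n^'n) l"
proof -
  have "transpose M - mat l = transpose (M - mat l)"
    by (simp add: transpose_def mat_def vec_eq_iff)
  then show ?thesis by (simp add: is_eigenvalue_iff_not_invertible invertible_transpose_iff)
qed

lemma is_eigenvalue_cadj: "is_eigenvalue (cadj M) l \<longleftrightarrow> is_eigenvalue (M::complex^'n^'n) (cnj l)"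
proof -
  have "cadj M - mat l = cadj (M - mat (cnj l))" by (simp add: cadj_diff cadj_mat)
  then show ?thesis by (simp add: is_eigenvalue_iff_not_invertible invertible_cadj_iff)
qed

lemma not_invertible_one_minus_iff:
  "\<not> invertible (mat 1 - M) \<longleftrightarrow> is_eigenvalue (M::complex^'n^'n) 1"
  using invertible_uminus_iff[of "M - mat 1"] by (simp add: is_eigenvalue_iff_not_invertible)

section \<open>Annihilating polynomials\<close>

definition poly_mat :: "'a::comm_ring_1 poly \<Rightarrow> 'a^'n^'n \<Rightarrow> 'a^'n^'n" where
  "poly_mat p M = fold_coeffs (\<lambda>a B. mat a + M ** B) p 0"

lemma poly_mat_0 [simp]: "poly_mat 0 M = 0"
  by (simp add: poly_mat_def)

lemma poly_mat_pCons: "poly_mat (pCons a p) M = mat a + M ** poly_mat p M"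
  by (cases "p = 0 \<and> a = 0") (auto simp: poly_mat_def)

lemma poly_mat_1 [simp]: "poly_mat 1 M = mat 1"
  unfolding one_pCons poly_mat_pCons by simp

lemma poly_mat_add: "poly_mat (p + q) M = poly_mat p M + poly_mat q M"
  by (induction p q rule: poly_induct2)
    (simp_all add: poly_mat_pCons matrix_add_ldistrib mat_add[symmetric] algebra_simps)

lemma poly_mat_smult: "poly_mat (smult c p) M = mat c ** poly_mat p M"
  by (induction p)
    (simp_all add: poly_mat_pCons matrix_add_ldistrib mat_mult_mat matrix_mul_assoc
      mat_mult_commute[of c M])

lemma poly_mat_mult: "poly_mat (p * q) M = poly_mat p M ** poly_mat q M"
  by (induction p)
    (simp_all add: poly_mat_pCons poly_mat_add poly_mat_smult matrix_add_rdistrib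
      matrix_mul_assoc)

lemma poly_mat_sum: "poly_mat (\<Sum>k\<in>S. p k) M = (\<Sum>k\<in>S. poly_mat (p k) M)"
  by (induction S rule: infinite_finite_induct) (simp_all add: poly_mat_add)

lemma poly_mat_diff: "poly_mat (p - q) M = poly_mat p M - poly_mat q M"
  using poly_mat_add[of "p - q" q M] by simp

lemma poly_mat_linear: "poly_mat [:- r, 1:] M = M - mat r"
  by (simp add: poly_mat_pCons mat_uminus[symmetric])

lemma poly_mat_commute: "poly_mat p M ** M = M ** poly_mat p M"
  by (induction p)
    (simp_all add: poly_mat_pCons matrix_add_rdistrib matrix_add_ldistrib mat_mult_commute
      matrix_mul_assoc[symmetric])

lemma matrix_vector_mult_scale: "M *v (c *s v) = c *s (M *v (v::'a::comm_semiring_1^'n))"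
  by (simp add: vec_eq_iff matrix_vector_mult_def sum_distrib_left algebra_simps)

lemma poly_mat_eigenvector:
  assumes "M *v v = l *s v"
  shows "poly_mat p M *v v = poly p l *s v"
proof (induction p)
  case (pCons a p)
  have "poly_mat (pCons a p) M *v v = a *s v + M *v (poly_mat p M *v v)"
    by (simp add: poly_mat_pCons matrix_vector_mult_add_rdistrib mat_mult_vector
        matrix_vector_mul_assoc)
  also have "\<dots> = poly (pCons a p) l *s v"
    by (simp add: pCons.IH matrix_vector_mult_scale assms algebra_simps)
  finally show ?case .
qed simp

lemma vecm_inject: "vecm X = vecm Y \<longleftrightarrow> X = Y"
  by (auto simp: vecm_def vec_eq_iff)

lemma vecm_0 [simp]: "vecm 0 = 0"
  by (simp add: vecm_def vec_eq_iff)

lemma vecm_sum: "vecm (\<Sum>k\<in>S. f k) = (\<Sum>k\<in>S. vecm (f k))"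
  by (induction S rule: infinite_finite_induct) (simp_all add: vecm_def vec_eq_iff)

lemma vecm_mat_mult: "vecm (mat c ** X) = c *s vecm (X::complex^'n^'m)"
  by (simp add: vecm_def vec_eq_iff mat_mult_left)

text \<open>The \<open>d\<^sup>2 + 1\<close> powers \<open>M\<^sup>0, \<dots>, M\<^sup>d\<^sup>2\<close> are linearly dependent.\<close>
lemma annihilating_poly_exists: "\<exists>p. p \<noteq> 0 \<and> poly_mat p (M::complex^'n^'n) = 0"
proof -
  define N where "N = CARD('n \<times> 'n)"
  define w where "w k = vecm (poly_mat (monom 1 k) M)" for k
  show ?thesis
  proof (cases "inj_on w {..N}")
    case True
    define S where "S = w ` {..N}"
    have "vec.dim S \<le> N" unfolding N_def by (rule dim_subset_UNIV_cart_gen)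
    moreover have "card S = Suc N" using True by (simp add: S_def card_image)
    ultimately have "vec.dependent S" by (intro vec.dependent_biggerset_general) auto
    then obtain u where u: "\<exists>v\<in>S. u v \<noteq> 0" "(\<Sum>v\<in>S. u v *s v) = 0"
      using vec.dependent_finite[of S] by (auto simp: S_def)
    define p where "p = (\<Sum>k\<le>N. smult (u (w k)) (monom 1 k))"
    obtain k0 where k0: "k0 \<le> N" "u (w k0) \<noteq> 0" using u(1) S_def by auto
    have "coeff p k0 = u (w k0)"
      using k0(1) by (simp add: p_def coeff_sum coeff_monom if_distrib if_distribR cong: if_cong)
    then have "p \<noteq> 0" using k0 by auto
    moreover have "vecm (poly_mat p M) = (\<Sum>v\<in>S. u v *s v)"
      unfolding S_def sum.reindex[OF True]
      by (simp add: p_def poly_mat_sum poly_mat_smult vecm_sum vecm_mat_mult w_def)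
    ultimately show ?thesis using u(2) by (metis vecm_inject vecm_0)
  next
    case False
    then obtain i j where ij: "i \<noteq> j" "w i = w j" by (auto simp: inj_on_def)
    define p :: "complex poly" where "p = monom 1 i - monom 1 j"
    have "coeff p i = 1" using ij by (simp add: p_def)
    then have "p \<noteq> 0" by auto
    moreover have "poly_mat p M = 0"
      using ij by (simp add: p_def poly_mat_diff w_def vecm_inject)
    ultimately show ?thesis by blast
  qed
qed

lemma annihilating_linear_factors:
  "\<exists>ms. poly_mat (\<Prod>m\<leftarrow>ms. [:- m, 1:]) (M::complex^'n^'n) = 0"
proof -
  obtain p where p: "p \<noteq> 0" "poly_mat p M = 0" using annihilating_poly_exists by blast
  obtain ms where ms: "mset ms = proots p" using ex_mset by blast
  have "p = smult (lead_coeff p) (\<Prod>m\<leftarrow>ms. [:- m, 1:])"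
    using complex_poly_decompose_multiset[of p]
    by (simp add: ms[symmetric] prod_mset_prod_list[symmetric])
  then have "mat (lead_coeff p) ** poly_mat (\<Prod>m\<leftarrow>ms. [:- m, 1:]) M = 0"
    using p(2) by (metis poly_mat_smult)
  then have "mat (inverse (lead_coeff p)) ** mat (lead_coeff p)
      ** poly_mat (\<Prod>m\<leftarrow>ms. [:- m, 1:]) M = 0"
    by (simp add: matrix_mul_assoc[symmetric])
  then show ?thesis using p(1) by (auto simp: mat_mult_mat)
qed

text \<open>The witness \<open>p\<close> is the shortest partial product of the linear factors such that
  \<open>X p(B)\<close> is annihilated by the next factor \<open>B - m I\<close>.\<close>
lemma left_eigenvector_from_annihilator:
  fixes X :: "complex^'n^'k" and B :: "complex^'n^'n"
  assumes "X ** poly_mat (\<Prod>m\<leftarrow>ms. [:- m, 1:]) B = 0" and "X \<noteq> 0"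
  shows "\<exists>p m. X ** poly_mat p B \<noteq> 0 \<and> X ** poly_mat p B ** B = mat m ** (X ** poly_mat p B)"
  using assms
proof (induction ms arbitrary: X)
  case Nil
  then show ?case by simp
next
  case (Cons m ms)
  show ?case
  proof (cases "X ** (B - mat m) = 0")
    case True
    then have "X ** poly_mat 1 B ** B = mat m ** (X ** poly_mat 1 B)"
      by (simp add: matrix_diff_ldistrib mat_mult_left mat_mult_right)
    with Cons.prems(2) show ?thesis by (intro exI[of _ "1::complex poly"] exI[of _ m]) simp
  next
    case False
    have "X ** (B - mat m) ** poly_mat (\<Prod>m\<leftarrow>ms. [:- m, 1:]) B = 0"
      using Cons.prems(1)
      by (simp only: list.map prod_list.Cons poly_mat_mult poly_mat_linear matrix_mul_assoc)
    from Cons.IH[OF this False] obtain p m' where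
      "X ** (B - mat m) ** poly_mat p B \<noteq> 0"
      "X ** (B - mat m) ** poly_mat p B ** B = mat m' ** (X ** (B - mat m) ** poly_mat p B)"
      by blast
    moreover have "X ** poly_mat ([:- m, 1:] * p) B = X ** (B - mat m) ** poly_mat p B"
      by (simp only: poly_mat_mult poly_mat_linear matrix_mul_assoc)
    ultimately show ?thesis by metis
  qed
qed

lemma eigenvalue_exists: "\<exists>l. is_eigenvalue (M::complex^'n^'n) l"
proof -
  obtain ms where "poly_mat (\<Prod>m\<leftarrow>ms. [:- m, 1:]) M = 0"
    using annihilating_linear_factors by blast
  then have "mat 1 ** poly_mat (\<Prod>m\<leftarrow>ms. [:- m, 1:]) M = 0" by simp
  moreover have "(mat 1 :: complex^'n^'n) \<noteq> 0"
  proof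
    assume "(mat 1 :: complex^'n^'n) = 0"
    then have "(mat 1 :: complex^'n^'n) $ undefined $ undefined = 0" by simp
    then show False by (simp add: mat_def)
  qed
  ultimately obtain p m where "mat 1 ** poly_mat p M \<noteq> 0"
      "mat 1 ** poly_mat p M ** M = mat m ** (mat 1 ** poly_mat p M)"
    using left_eigenvector_from_annihilator by blast
  then show ?thesis using is_eigenvalueI_left by blast
qed

lemma finite_eigenvalues: "finite {l. is_eigenvalue (M::complex^'n^'n) l}"
proof -
  obtain ms where ms: "poly_mat (\<Prod>m\<leftarrow>ms. [:- m, 1:]) M = 0"
    using annihilating_linear_factors by blast
  have "{l. is_eigenvalue M l} \<subseteq> set ms"
  proof
    fix l assume "l \<in> {l. is_eigenvalue M l}"
    then obtain v where v: "v \<noteq> 0" "M *v v = l *s v" by (auto simp: is_eigenvalue_def)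
    have "poly (\<Prod>m\<leftarrow>ms. [:- m, 1:]) l *s v = 0"
      using poly_mat_eigenvector[OF v(2), of "\<Prod>m\<leftarrow>ms. [:- m, 1:]"] ms by simp
    moreover have "poly (\<Prod>m\<leftarrow>ms. [:- m, 1:]) l = (\<Prod>m\<leftarrow>ms. l - m)"
      by (induction ms) (simp_all add: algebra_simps)
    ultimately have "(\<Prod>m\<leftarrow>ms. l - m) = 0"
      using v(1) by simp
    then show "l \<in> set ms" by (auto simp: prod_list_zero_iff)
  qed
  then show ?thesis by (rule finite_subset) simp
qed

lemma spectral_radius_ge: "is_eigenvalue M l \<Longrightarrow> cmod l \<le> spectral_radius (M::complex^'n^'n)"
  unfolding spectral_radius_def
  by (rule Max_ge) (use finite_eigenvalues[of M] in \<open>auto simp: setcompr_eq_image\<close>)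

lemma spectral_radius_attained:
  "\<exists>l. is_eigenvalue (M::complex^'n^'n) l \<and> cmod l = spectral_radius M"
proof -
  have "spectral_radius M \<in> {cmod l | l. is_eigenvalue M l}"
    unfolding spectral_radius_def using finite_eigenvalues[of M] eigenvalue_exists[of M]
    by (intro Max_in) (auto simp: setcompr_eq_image)
  then show ?thesis by auto
qed

section \<open>Eigenvalues of \<open>X \<mapsto> A X C\<close>\<close>

lemma eigenvalue_of_sandwich:
  fixes A :: "complex^'m^'m" and B :: "complex^'n^'n" and X :: "complex^'n^'m"
  assumes X: "A ** X ** B = mat \<nu> ** X" and "X \<noteq> 0"
  shows "\<exists>l u. is_eigenvalue A l \<and> is_eigenvalue B u \<and> \<nu> = l * u"
proof -
  obtain ms where "poly_mat (\<Prod>m\<leftarrow>ms. [:- m, 1:]) B = 0"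
    using annihilating_linear_factors by blast
  then have "X ** poly_mat (\<Prod>m\<leftarrow>ms. [:- m, 1:]) B = 0" by simp
  then obtain p u where "X ** poly_mat p B \<noteq> 0"
      "X ** poly_mat p B ** B = mat u ** (X ** poly_mat p B)"
    using left_eigenvector_from_annihilator \<open>X \<noteq> 0\<close> by blast
  moreover define Y where "Y = X ** poly_mat p B"
  ultimately have Y: "Y \<noteq> 0" "Y ** B = mat u ** Y" by simp_all
  have u: "is_eigenvalue B u" using is_eigenvalueI_left[OF Y(2,1)] .
  have "mat u ** (A ** Y) = A ** (Y ** B)"
    by (simp add: Y(2) matrix_mul_assoc mat_mult_commute)
  also have "\<dots> = A ** X ** B ** poly_mat p B"
    by (simp add: Y_def poly_mat_commute flip: matrix_mul_assoc)
  also have "\<dots> = mat \<nu> ** Y"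
    by (simp add: X Y_def matrix_mul_assoc)
  finally have AY: "mat u ** (A ** Y) = mat \<nu> ** Y" .
  show ?thesis
  proof (cases "u = 0")
    case True
    then have "\<nu> = 0" using AY \<open>Y \<noteq> 0\<close> by (auto simp: mat_mult_left vec_eq_iff)
    moreover obtain l where "is_eigenvalue A l" using eigenvalue_exists by blast
    ultimately show ?thesis using u True by auto
  next
    case False
    have "A ** Y = mat (inverse u) ** (mat u ** (A ** Y))"
      using False by (simp add: matrix_mul_assoc mat_mult_mat)
    also have "\<dots> = mat (inverse u) ** (mat \<nu> ** Y)"
      by (simp only: AY)
    also have "\<dots> = mat (\<nu> / u) ** Y"
      by (simp add: matrix_mul_assoc mat_mult_mat divide_inverse mult.commute)
    finally have "A ** Y = mat (\<nu> / u) ** Y" .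
    then have "is_eigenvalue A (\<nu> / u)" using \<open>Y \<noteq> 0\<close> by (rule is_eigenvalueI_right)
    then show ?thesis using u False by (intro exI[of _ "\<nu> / u"] exI[of _ u]) simp
  qed
qed

lemma vecm_sandwich:
  fixes A :: "complex^'m^'m" and C :: "complex^'n^'n" and X :: "complex^'n^'m"
  shows "kron (transpose C) A *v vecm X = vecm (A ** X ** C)"
proof -
  have "(kron (transpose C) A *v vecm X) $ (i, j) = (A ** X ** C) $ i $ j" for i j
  proof -
    have "(kron (transpose C) A *v vecm X) $ (i, j) =
        (\<Sum>q\<in>UNIV \<times> UNIV. C $ snd q $ j * A $ i $ fst q * X $ fst q $ snd q)"
      by (simp add: kron_def vecm_def transpose_def matrix_vector_mult_def UNIV_Times_UNIV)
    also have "\<dots> = (\<Sum>k\<in>UNIV. \<Sum>l\<in>UNIV. C $ l $ j * A $ i $ k * X $ k $ l)"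
      by (simp add: sum.cartesian_product case_prod_beta)
    also have "\<dots> = (\<Sum>l\<in>UNIV. \<Sum>k\<in>UNIV. A $ i $ k * X $ k $ l * C $ l $ j)"
      by (subst sum.swap) (simp add: mult_ac)
    also have "\<dots> = (A ** X ** C) $ i $ j"
      by (simp add: matrix_matrix_mult_def sum_distrib_right)
    finally show ?thesis .
  qed
  then show ?thesis by (simp add: vec_eq_iff vecm_def)
qed

lemma is_eigenvalue_kron:
  fixes A :: "complex^'m^'m" and C :: "complex^'n^'n"
  shows "is_eigenvalue (kron (transpose C) A) \<nu> \<longleftrightarrow>
    (\<exists>l u. is_eigenvalue A l \<and> is_eigenvalue C u \<and> \<nu> = l * u)"
proof
  assume "is_eigenvalue (kron (transpose C) A) \<nu>"
  then obtain v where v: "v \<noteq> 0" "kron (transpose C) A *v v = \<nu> *s v"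
    by (auto simp: is_eigenvalue_def)
  define X :: "complex^'n^'m" where "X = (\<chi> i j. v $ (i, j))"
  have vX: "vecm X = v" by (simp add: X_def vecm_def vec_eq_iff)
  have "vecm (A ** X ** C) = vecm (mat \<nu> ** X)"
    using v(2) by (simp add: vecm_sandwich[symmetric] vX vecm_mat_mult)
  then have "A ** X ** C = mat \<nu> ** X" by (simp add: vecm_inject)
  moreover have "X \<noteq> 0" using v(1) vX by auto
  ultimately show "\<exists>l u. is_eigenvalue A l \<and> is_eigenvalue C u \<and> \<nu> = l * u"
    by (rule eigenvalue_of_sandwich)
next
  assume "\<exists>l u. is_eigenvalue A l \<and> is_eigenvalue C u \<and> \<nu> = l * u"
  then obtain l u where lu: "\<nu> = l * u" "is_eigenvalue A l" "is_eigenvalue (transpose C) u"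
    by (auto simp: is_eigenvalue_transpose)
  then obtain v w where v: "v \<noteq> 0" "A *v v = l *s v" and w: "w \<noteq> 0" "w v* C = u *s w"
    by (auto simp: is_eigenvalue_def)
  obtain i0 where i0: "v $ i0 \<noteq> 0" using v(1) by (metis vec_eq_iff zero_index)
  obtain j0 where j0: "w $ j0 \<noteq> 0" using w(1) by (metis vec_eq_iff zero_index)
  define X :: "complex^'n^'m" where "X = (\<chi> i j. v $ i * w $ j)"
  have Av: "(\<Sum>k\<in>UNIV. A $ i $ k * v $ k) = l * v $ i" for i
    using v(2) by (simp add: vec_eq_iff matrix_vector_mult_def)
  have Cw: "(\<Sum>k\<in>UNIV. w $ k * C $ k $ j) = u * w $ j" for j
    using w(2) by (simp add: vec_eq_iff vector_matrix_mult_def)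
  have "(A ** X) $ i $ j = (\<Sum>k\<in>UNIV. A $ i $ k * v $ k) * w $ j" for i j
    by (simp add: matrix_matrix_mult_def X_def mult.assoc sum_distrib_right)
  then have AX: "(A ** X) $ i $ j = l * v $ i * w $ j" for i j
    by (simp add: Av)
  have "(A ** X ** C) $ i $ j = (\<Sum>k\<in>UNIV. (A ** X) $ i $ k * C $ k $ j)" for i j
    unfolding matrix_matrix_mult_def[of "A ** X" C] by simp
  also have "\<dots> i j = l * v $ i * (\<Sum>k\<in>UNIV. w $ k * C $ k $ j)" for i j
    by (simp add: AX sum_distrib_left mult.assoc)
  finally have "(A ** X ** C) $ i $ j = \<nu> * X $ i $ j" for i j
    by (simp add: Cw X_def lu(1) mult_ac)
  then have "kron (transpose C) A *v vecm X = \<nu> *s vecm X"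
    unfolding vecm_sandwich by (simp add: vecm_def vec_eq_iff)
  moreover have "vecm X $ (i0, j0) \<noteq> 0" using i0 j0 by (simp add: vecm_def X_def)
  then have "vecm X \<noteq> 0" by auto
  ultimately show "is_eigenvalue (kron (transpose C) A) \<nu>"
    unfolding is_eigenvalue_def by blast
qed

lemma is_eigenvalue_kron_mconj:
  "is_eigenvalue (kron (mconj A) A) \<nu> \<longleftrightarrow>
    (\<exists>l u. is_eigenvalue A l \<and> is_eigenvalue A u \<and> \<nu> = l * cnj u)"
  unfolding transpose_cadj[symmetric] is_eigenvalue_kron is_eigenvalue_cadj
proof
  assume "\<exists>l u. is_eigenvalue A l \<and> is_eigenvalue A (cnj u) \<and> \<nu> = l * u"
  then obtain l u where "is_eigenvalue A l" "is_eigenvalue A (cnj u)" "\<nu> = l * u" by blast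
  then show "\<exists>l u. is_eigenvalue A l \<and> is_eigenvalue A u \<and> \<nu> = l * cnj u"
    by (intro exI[of _ l] exI[of _ "cnj u"]) simp
next
  assume "\<exists>l u. is_eigenvalue A l \<and> is_eigenvalue A u \<and> \<nu> = l * cnj u"
  then obtain l u where "is_eigenvalue A l" "is_eigenvalue A u" "\<nu> = l * cnj u" by blast
  then show "\<exists>l u. is_eigenvalue A l \<and> is_eigenvalue A (cnj u) \<and> \<nu> = l * u"
    by (intro exI[of _ l] exI[of _ "cnj u"]) simp
qed

lemma is_eigenvalue_kron_mconj_1:
  assumes "\<exists>u. cmod u = 1 \<and> is_eigenvalue A u"
  shows "is_eigenvalue (kron (mconj A) A) 1"
proof -
  obtain u where "cmod u = 1" "is_eigenvalue A u" using assms by blast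
  moreover have "1 = u * cnj u" using complex_norm_square[of u] \<open>cmod u = 1\<close> by simp
  ultimately show ?thesis using is_eigenvalue_kron_mconj by blast
qed

lemma norm_eigenvalue_kron_mconj:
  assumes "spectral_radius A \<le> 1" and "is_eigenvalue (kron (mconj A) A) \<nu>"
  shows "cmod \<nu> \<le> 1" and "cmod \<nu> = 1 \<Longrightarrow> \<exists>u. cmod u = 1 \<and> is_eigenvalue A u"
proof -
  obtain l u where lu: "is_eigenvalue A l" "is_eigenvalue A u" "\<nu> = l * cnj u"
    using assms(2) is_eigenvalue_kron_mconj by blast
  have "cmod l \<le> 1" "cmod u \<le> 1"
    using spectral_radius_ge[OF lu(1)] spectral_radius_ge[OF lu(2)] assms(1) by linarith+
  moreover have "cmod \<nu> = cmod l * cmod u" by (simp add: lu(3) norm_mult)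
  ultimately show "cmod \<nu> \<le> 1" by (simp add: mult_le_one)
  show "\<exists>u. cmod u = 1 \<and> is_eigenvalue A u" if "cmod \<nu> = 1"
  proof -
    have "cmod l * cmod u \<le> cmod u"
      using \<open>cmod l \<le> 1\<close> by (simp add: mult_left_le_one_le)
    then have "1 \<le> cmod u" using \<open>cmod \<nu> = cmod l * cmod u\<close> that by simp
    then show ?thesis using \<open>cmod u \<le> 1\<close> lu(2) by (intro exI[of _ u]) simp
  qed
qed

lemma is_eigenvalue_kron_mconj_1_iff:
  assumes "spectral_radius A \<le> 1"
  shows "is_eigenvalue (kron (mconj A) A) 1 \<longleftrightarrow> (\<exists>u. cmod u = 1 \<and> is_eigenvalue A u)"
  using is_eigenvalue_kron_mconj_1 norm_eigenvalue_kron_mconj(2)[OF assms] by fastforce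

lemma spectral_radius_kron_mconj_eq_1_iff:
  assumes "spectral_radius A \<le> 1"
  shows "spectral_radius (kron (mconj A) A) = 1 \<longleftrightarrow> (\<exists>u. cmod u = 1 \<and> is_eigenvalue A u)"
proof -
  obtain \<nu> where \<nu>: "is_eigenvalue (kron (mconj A) A) \<nu>"
    "cmod \<nu> = spectral_radius (kron (mconj A) A)"
    using spectral_radius_attained by blast
  show ?thesis
  proof
    assume "spectral_radius (kron (mconj A) A) = 1"
    then show "\<exists>u. cmod u = 1 \<and> is_eigenvalue A u"
      using norm_eigenvalue_kron_mconj(2)[OF assms \<nu>(1)] \<nu>(2) by simp
  next
    assume "\<exists>u. cmod u = 1 \<and> is_eigenvalue A u"
    then have "1 \<le> spectral_radius (kron (mconj A) A)"
      using is_eigenvalue_kron_mconj_1 spectral_radius_ge by fastforce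
    moreover have "spectral_radius (kron (mconj A) A) \<le> 1"
      using norm_eigenvalue_kron_mconj(1)[OF assms \<nu>(1)] \<nu>(2) by simp
    ultimately show "spectral_radius (kron (mconj A) A) = 1" by simp
  qed
qed

section \<open>Derivative of the matrix inverse\<close>

lemma bounded_bilinear_matrix_matrix_mult:
  "bounded_bilinear ((**) :: complex^'n^'m \<Rightarrow> complex^'k^'n \<Rightarrow> complex^'k^'m)"
  unfolding bilinear_conv_bounded_bilinear[symmetric] bilinear_def
  by (auto intro!: linearI simp: matrix_add_ldistrib matrix_add_rdistrib matrix_scalar_ac
      scalar_matrix_assoc)

lemma bounded_linear_matrix_sandwich:
  "bounded_linear (\<lambda>E::complex^'n^'m. L ** E ** (R::complex^'k^'n))"
  using bounded_linear_compose[OF bounded_bilinear.bounded_linear_left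
      bounded_bilinear.bounded_linear_right, OF bounded_bilinear_matrix_matrix_mult
      bounded_bilinear_matrix_matrix_mult] .

lemma matrix_inv_diff:
  fixes X Y :: "complex^'n^'n"
  assumes "invertible X" and "invertible Y"
  shows "matrix_inv Y - matrix_inv X = matrix_inv Y ** (X - Y) ** matrix_inv X"
proof -
  have "matrix_inv Y ** (X - Y) ** matrix_inv X
      = matrix_inv Y ** (X ** matrix_inv X) - (matrix_inv Y ** Y) ** matrix_inv X"
    by (simp add: matrix_diff_ldistrib matrix_diff_rdistrib matrix_mul_assoc)
  then show ?thesis by (simp add: assms matrix_inv_left matrix_inv_right)
qed

lemma eventually_invertible:
  assumes "invertible (X::complex^'n^'n)"
  shows "\<forall>\<^sub>F Y in at X. invertible Y"
proof -
  have "isCont det X" unfolding det_def by (intro continuous_intros)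
  then have "\<forall>\<^sub>F Y in at X. det Y \<noteq> 0"
    using assms unfolding isCont_def invertible_det_nz by (rule tendsto_imp_eventually_ne)
  then show ?thesis by (simp add: invertible_det_nz)
qed

lemma isCont_matrix_inv:
  assumes X: "invertible (X::complex^'n^'n)"
  shows "isCont matrix_inv X"
proof -
  obtain K where "K > 0" and K: "\<And>(A :: complex^'n^'n) (B :: complex^'n^'n).
      norm (A ** B) \<le> norm A * norm B * K"
    using bounded_bilinear.pos_bounded[OF bounded_bilinear_matrix_matrix_mult] by blast
  define a where "a = norm (matrix_inv X)"
  have "a \<ge> 0" by (simp add: a_def)
  have "((\<lambda>Y. norm (Y - X) * (K * K * a)) \<longlongrightarrow> 0) (at X)"
    by (intro tendsto_mult_left_zero tendsto_norm_zero LIM_zero tendsto_ident_at)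
  then have "\<forall>\<^sub>F Y in at X. norm (Y - X) * (K * K * a) < 1 / 2"
    by (rule order_tendstoD) simp
  with eventually_invertible[OF X]
  have "\<forall>\<^sub>F Y in at X. norm (matrix_inv Y - matrix_inv X) \<le> norm (Y - X) * (K * K * a * (2 * a))"
  proof eventually_elim
    case (elim Y)
    define c where "c = norm (Y - X) * (K * K * a)"
    have "c \<ge> 0" using \<open>K > 0\<close> \<open>a \<ge> 0\<close> by (simp add: c_def)
    define D where "D = matrix_inv Y - matrix_inv X"
    have "norm D \<le> norm (matrix_inv Y ** (X - Y)) * a * K"
      using K[of "matrix_inv Y ** (X - Y)" "matrix_inv X"]
      by (simp add: D_def matrix_inv_diff X elim a_def)
    also have "\<dots> \<le> (norm (matrix_inv Y) * norm (X - Y) * K) * (a * K)"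
      unfolding mult.assoc[of _ a K]
      using \<open>K > 0\<close> \<open>a \<ge> 0\<close> by (intro mult_right_mono K) simp
    also have "\<dots> = norm (matrix_inv Y) * c"
      by (simp add: c_def norm_minus_commute mult_ac)
    finally have D: "norm D \<le> norm (matrix_inv Y) * c" .
    have "norm (matrix_inv Y) \<le> a + norm D"
      unfolding a_def D_def by (rule norm_triangle_sub)
    also have "\<dots> \<le> a + norm (matrix_inv Y) * (1 / 2)"
      using D mult_left_mono[of c "1 / 2" "norm (matrix_inv Y)"] elim(2) by (simp add: c_def)
    finally have "norm (matrix_inv Y) \<le> 2 * a" by simp
    then have "norm D \<le> 2 * a * c"
      using D mult_right_mono[OF _ \<open>c \<ge> 0\<close>] by fastforce
    then show ?case by (simp add: D_def c_def mult_ac)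
  qed
  then have "((\<lambda>Y. matrix_inv Y - matrix_inv X) \<longlongrightarrow> 0) (at X)"
    by (rule tendsto_0_le[OF LIM_zero[OF tendsto_ident_at]])
  then show ?thesis unfolding isCont_def by (rule LIM_zero_cancel)
qed

lemma has_derivative_matrix_inv:
  assumes X: "invertible (X::complex^'n^'n)"
  shows "(matrix_inv has_derivative (\<lambda>E. - (matrix_inv X ** E ** matrix_inv X))) (at X)"
proof -
  obtain K where "K > 0" and K: "\<And>(A :: complex^'n^'n) (B :: complex^'n^'n).
      norm (A ** B) \<le> norm A * norm B * K"
    using bounded_bilinear.pos_bounded[OF bounded_bilinear_matrix_matrix_mult] by blast
  define a where "a = norm (matrix_inv X)"
  obtain d where "d > 0" and d: "\<And>Y. Y \<noteq> X \<Longrightarrow> dist Y X < d \<Longrightarrow> invertible Y"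
    using eventually_invertible[OF X] by (auto simp: eventually_at)
  show ?thesis
  proof (rule has_derivativeI_sandwich[OF \<open>d > 0\<close>])
    show "bounded_linear (\<lambda>E. - (matrix_inv X ** E ** matrix_inv X))"
      by (intro bounded_linear_minus bounded_linear_matrix_sandwich)
  next
    fix Y assume "Y \<noteq> X" "dist Y X < d"
    then have Y: "invertible Y" by (rule d)
    have "matrix_inv Y - matrix_inv X - - (matrix_inv X ** (Y - X) ** matrix_inv X)
        = (matrix_inv X - matrix_inv Y) ** (Y - X) ** matrix_inv X"
      by (simp add: matrix_inv_diff[OF X Y] matrix_diff_rdistrib matrix_diff_ldistrib matrix_uminus_left
          matrix_uminus_right matrix_mul_assoc)
    then have "norm (matrix_inv Y - matrix_inv X - - (matrix_inv X ** (Y - X) ** matrix_inv X))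
        \<le> norm ((matrix_inv X - matrix_inv Y) ** (Y - X)) * a * K"
      using K by (simp add: a_def)
    also have "\<dots> \<le> (norm (matrix_inv X - matrix_inv Y) * norm (Y - X) * K) * (a * K)"
      unfolding mult.assoc[of _ a K]
      using \<open>K > 0\<close> by (intro mult_right_mono K) (simp add: a_def)
    also have "\<dots> = norm (matrix_inv Y - matrix_inv X) * (K * K * a) * norm (Y - X)"
      by (simp add: norm_minus_commute mult_ac)
    finally show "norm (matrix_inv Y - matrix_inv X - - (matrix_inv X ** (Y - X) ** matrix_inv X))
        / norm (Y - X) \<le> norm (matrix_inv Y - matrix_inv X) * (K * K * a)"
      using \<open>Y \<noteq> X\<close> by (simp add: divide_le_eq)
  next
    show "((\<lambda>Y. norm (matrix_inv Y - matrix_inv X) * (K * K * a)) \<longlongrightarrow> 0) (at X)"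
      using isCont_matrix_inv[OF X] unfolding isCont_def
      by (intro tendsto_mult_left_zero tendsto_norm_zero LIM_zero)
  qed
qed

lemma has_derivative_riccati:
  fixes L :: "complex^'n^'m" and R :: "complex^'k^'n"
  assumes X: "invertible (X::complex^'n^'n)"
  shows "((\<lambda>Y. C - L ** matrix_inv Y ** R) has_derivative
    (\<lambda>E. L ** matrix_inv X ** E ** matrix_inv X ** R)) (at X)"
proof -
  have "((\<lambda>Y. L ** matrix_inv Y ** R) has_derivative
      (\<lambda>E. L ** - (matrix_inv X ** E ** matrix_inv X) ** R)) (at X)"
    by (rule bounded_linear.has_derivative[OF bounded_linear_matrix_sandwich
          has_derivative_matrix_inv[OF X]])
  from has_derivative_diff[OF has_derivative_const this] show ?thesis
    by (rule has_derivative_eq_rhs)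
      (simp add: fun_eq_iff matrix_uminus_left matrix_uminus_right matrix_mul_assoc)
qed

section \<open>The spectral density on the unit circle\<close>

lemma gram_inv_left:
  fixes H0 H1 :: "complex^'n^'n"
  assumes "invertible H0"
  shows "cadj (H0 ** cadj H1) ** matrix_inv (H0 ** cadj H0) = H1 ** matrix_inv H0"
proof -
  have "cadj (H0 ** cadj H1) ** matrix_inv (H0 ** cadj H0)
      = H1 ** cadj (matrix_inv H0 ** H0) ** matrix_inv H0"
    using assms by (simp add: cadj_mult matrix_inv_mult invertible_cadj_iff matrix_inv_cadj
        matrix_mul_assoc)
  then show ?thesis by (simp add: assms matrix_inv_left cadj_mat)
qed

lemma gram_inv_right:
  fixes H0 H1 :: "complex^'n^'n"
  assumes "invertible H0"
  shows "matrix_inv (H0 ** cadj H0) ** (H0 ** cadj H1) = cadj (H1 ** matrix_inv H0)"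
proof -
  have "matrix_inv (H0 ** cadj H0) ** (H0 ** cadj H1)
      = cadj (matrix_inv H0) ** (matrix_inv H0 ** H0) ** cadj H1"
    using assms by (simp add: matrix_inv_mult invertible_cadj_iff matrix_inv_cadj
        matrix_mul_assoc)
  then show ?thesis by (simp add: assms cadj_mult matrix_inv_left)
qed

lemma riccati_fixed_point:
  fixes H0 H1 :: "complex^'n^'n"
  assumes "invertible H0"
  shows "H0 ** cadj H0 + H1 ** cadj H1
      - cadj (H0 ** cadj H1) ** matrix_inv (H0 ** cadj H0) ** (H0 ** cadj H1) = H0 ** cadj H0"
proof -
  have "cadj (H0 ** cadj H1) ** matrix_inv (H0 ** cadj H0) ** (H0 ** cadj H1)
      = H1 ** (matrix_inv H0 ** H0) ** cadj H1"
    by (simp add: gram_inv_left[OF assms] matrix_mul_assoc)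
  then show ?thesis by (simp add: assms matrix_inv_left)
qed

lemma gram_add_cscale:
  fixes M N :: "complex^'n^'m"
  assumes "c * cnj c = 1"
  shows "(M + cscale c N) ** cadj (M + cscale c N)
    = cscale c (N ** cadj M) + (M ** cadj M + N ** cadj N) + cscale (cnj c) (M ** cadj N)"
proof -
  have "((M + cscale c N) ** cadj (M + cscale c N)) $ i $ j
      = (\<Sum>k\<in>UNIV. (M$i$k + c * N$i$k) * (cnj (M$j$k) + cnj c * cnj (N$j$k)))" for i j
    by (simp add: matrix_matrix_mult_def cadj_def cscale_def)
  also have "\<dots> i j = (\<Sum>k\<in>UNIV. M$i$k * cnj (M$j$k) + cnj c * (M$i$k * cnj (N$j$k))
      + c * (N$i$k * cnj (M$j$k)) + (c * cnj c) * (N$i$k * cnj (N$j$k)))" for i j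
    by (intro sum.cong refl) (simp add: algebra_simps)
  finally show ?thesis
    by (simp add: vec_eq_iff assms cscale_def matrix_matrix_mult_def cadj_def sum.distrib
        sum_distrib_left)
qed

text \<open>On the unit circle \<open>P(\<theta>) = H H\<^sup>*\<close> with \<open>H = H\<^sub>0 + \<theta>\<^sup>-\<^sup>1 H\<^sub>1 = \<theta>\<^sup>-\<^sup>1 (A + \<theta> I) H\<^sub>0\<close>.\<close>
lemma det_spectral_density_eq_0_iff:
  fixes H0 H1 :: "complex^'n^'n"
  assumes H0: "invertible H0" and \<theta>: "cmod \<theta> = 1"
  shows "det (cscale (inverse \<theta>) (cadj (H0 ** cadj H1)) + (H0 ** cadj H0 + H1 ** cadj H1)
      + cscale \<theta> (H0 ** cadj H1)) = 0
    \<longleftrightarrow> is_eigenvalue (H1 ** matrix_inv H0) (- \<theta>)"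
proof -
  define A where "A = H1 ** matrix_inv H0"
  define H where "H = H0 + cscale (cnj \<theta>) H1"
  have unit: "cnj \<theta> * \<theta> = 1" "\<theta> * cnj \<theta> = 1"
    using complex_norm_square[of \<theta>] \<theta> by (simp_all add: mult.commute)
  then have "inverse \<theta> = cnj \<theta>" by (metis inverse_unique)
  then have P: "cscale (inverse \<theta>) (cadj (H0 ** cadj H1)) + (H0 ** cadj H0 + H1 ** cadj H1)
      + cscale \<theta> (H0 ** cadj H1) = H ** cadj H"
    unfolding H_def by (simp add: gram_add_cscale unit cadj_mult)
  have "H = cscale (cnj \<theta>) (A - mat (- \<theta>)) ** H0"
    by (simp add: H_def A_def cscale_eq_mat_mult matrix_add_rdistrib matrix_add_ldistrib
        matrix_diff_rdistrib matrix_mul_assoc[symmetric] matrix_inv_left[OF H0] mat_uminus[symmetric]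
        mat_mult_mat unit)
  then have "invertible H \<longleftrightarrow> invertible (A - mat (- \<theta>))"
    using \<theta> H0 by (auto simp: invertible_mult_iff cscale_eq_mat_mult invertible_mat_iff)
  moreover have "invertible (H ** cadj H) \<longleftrightarrow> invertible H"
    by (simp add: invertible_mult_iff invertible_cadj_iff)
  ultimately show ?thesis
    by (simp add: P A_def is_eigenvalue_iff_not_invertible invertible_det_nz)
qed

lemma unit_circle_root_iff:
  fixes H0 H1 :: "complex^'n^'n"
  assumes "invertible H0"
  shows "(\<exists>\<theta>. cmod \<theta> = 1 \<and> det (cscale (inverse \<theta>) (cadj (H0 ** cadj H1))
      + (H0 ** cadj H0 + H1 ** cadj H1) + cscale \<theta> (H0 ** cadj H1)) = 0)
    \<longleftrightarrow> (\<exists>u. cmod u = 1 \<and> is_eigenvalue (H1 ** matrix_inv H0) u)"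
  using det_spectral_density_eq_0_iff[OF assms] by (metis minus_minus norm_minus_cancel)

theorem mainTheorem3:
  fixes H0 H1 :: "complex^'n^'n"
    and P0 P1 Xbar A :: "complex^'n^'n"
    and P :: "complex \<Rightarrow> complex^'n^'n"
    and g :: "complex^'n^'n \<Rightarrow> complex^'n^'n"
    and J :: "complex^('n \<times> 'n)^('n \<times> 'n)"
  assumes inv: "invertible H0"
  defines "P0 \<equiv> H0 ** cadj H0 + H1 ** cadj H1"
    and "P1 \<equiv> H0 ** cadj H1"
    and "P \<equiv> (\<lambda>z. cscale (inverse z) (cadj P1) + P0 + cscale z P1)"
    and "Xbar \<equiv> H0 ** cadj H0"
    and "A \<equiv> H1 ** matrix_inv H0"
    and "g \<equiv> (\<lambda>X. P0 - cadj P1 ** matrix_inv X ** P1)"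
    and "J \<equiv> kron (mconj A) A"
  shows
    "(g Xbar = Xbar \<and> H1 = cadj P1 ** matrix_inv (cadj H0))
     \<and> (\<exists>D. (g has_derivative D) (at Xbar) \<and> (\<forall>E. vecm (D E) = J *v vecm E))
     \<and> ((\<exists>\<theta>. cmod \<theta> = 1 \<and> det (P \<theta>) = 0) \<longrightarrow> is_eigenvalue J 1)
     \<and> (spectral_radius A \<le> 1 \<and> is_eigenvalue J 1 \<longrightarrow> (\<exists>\<theta>. cmod \<theta> = 1 \<and> det (P \<theta>) = 0))
     \<and> (spectral_radius A \<le> 1 \<longrightarrow>
          (((\<exists>\<theta>. cmod \<theta> = 1 \<and> det (P \<theta>) = 0) \<longleftrightarrow> spectral_radius J = 1)
           \<and> (spectral_radius J = 1 \<longleftrightarrow> \<not> invertible (mat 1 - J))))"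
proof -
  have Xbar: "invertible Xbar" by (simp add: Xbar_def invertible_mult_iff invertible_cadj_iff inv)
  have A_left: "cadj P1 ** matrix_inv Xbar = A"
    unfolding P1_def Xbar_def A_def by (rule gram_inv_left[OF inv])
  have A_right: "matrix_inv Xbar ** P1 = cadj A"
    unfolding P1_def Xbar_def A_def by (rule gram_inv_right[OF inv])
  have fixed_point: "g Xbar = Xbar"
    unfolding g_def P0_def P1_def Xbar_def by (rule riccati_fixed_point[OF inv])
  have H1: "H1 = cadj P1 ** matrix_inv (cadj H0)"
    by (simp add: P1_def cadj_mult inv invertible_cadj_iff matrix_inv_right
        flip: matrix_mul_assoc)
  have "(g has_derivative (\<lambda>E. cadj P1 ** matrix_inv Xbar ** E ** matrix_inv Xbar ** P1)) (at Xbar)"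
    unfolding g_def by (rule has_derivative_riccati[OF Xbar])
  then have derivative: "(g has_derivative (\<lambda>E. A ** E ** cadj A)) (at Xbar)"
    unfolding A_left A_right[symmetric] by (simp add: matrix_mul_assoc)
  have vec_derivative: "vecm (A ** E ** cadj A) = J *v vecm E" for E
    by (simp add: J_def vecm_sandwich transpose_cadj[symmetric])
  have unit_root: "(\<exists>\<theta>. cmod \<theta> = 1 \<and> det (P \<theta>) = 0) \<longleftrightarrow> (\<exists>u. cmod u = 1 \<and> is_eigenvalue A u)"
    unfolding P_def P0_def P1_def A_def by (rule unit_circle_root_iff[OF inv])
  show ?thesis
    unfolding unit_root not_invertible_one_minus_iff J_def
    using fixed_point H1 derivative vec_derivative[unfolded J_def] is_eigenvalue_kron_mconj_1[of A]
      is_eigenvalue_kron_mconj_1_iff[of A] spectral_radius_kron_mconj_eq_1_iff[of A]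
    by blast
qed

end
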